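(* For every $n\geq 3$, the dihedral group $D_n\leq\mathrm{Sym}(n)$ (the group of rotations and reflections of a regular $n$-gon, acting on its $n$ vertices) has the strict EKR property.
   Context: For $G\leq \mathrm{Sym}(n)$: two permutations $\pi,\tau\in G$ intersect if $\pi\tau^{-1}$ has a fixed point in $\{1,\dots,n\}$. A subset of $G$ is intersecting if every pair of its elements intersect. $G$ has the EKR property if every intersecting subset of $G$ has size at most the size of the largest point-stabilizer in $G$. $G$ has the strict EKR property if it has the EKR property and the only intersecting subsets of maximum size in $G$ are the cosets of the point-stabilizers. *)

theory Defs
  imports "HOL-Combinatorics.Permutations"
begin

text \<open>Permutation groups are given as sets of functions nat \<Rightarrow> nat acting on a
finite point set Omega (here Omega = {1..n}); composition is function composition.\<close>

definition intersect :: "nat set \<Rightarrow> (nat \<Rightarrow> nat) \<Rightarrow> (nat \<Rightarrow> nat) \<Rightarrow> bool" where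
  "intersect \<Omega> \<pi> \<tau> \<longleftrightarrow> (\<exists>x\<in>\<Omega>. (\<pi> \<circ> inv \<tau>) x = x)"

definition intersecting :: "nat set \<Rightarrow> (nat \<Rightarrow> nat) set \<Rightarrow> bool" where
  "intersecting \<Omega> S \<longleftrightarrow> (\<forall>\<pi>\<in>S. \<forall>\<tau>\<in>S. intersect \<Omega> \<pi> \<tau>)"

definition stabilizer :: "(nat \<Rightarrow> nat) set \<Rightarrow> nat \<Rightarrow> (nat \<Rightarrow> nat) set" where
  "stabilizer G x = {g \<in> G. g x = x}"

definition max_stabilizer_size :: "nat set \<Rightarrow> (nat \<Rightarrow> nat) set \<Rightarrow> nat" where
  "max_stabilizer_size \<Omega> G = Max ((\<lambda>x. card (stabilizer G x)) ` \<Omega>)"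

definition EKR :: "nat set \<Rightarrow> (nat \<Rightarrow> nat) set \<Rightarrow> bool" where
  "EKR \<Omega> G \<longleftrightarrow> (\<forall>S. S \<subseteq> G \<and> intersecting \<Omega> S \<longrightarrow> card S \<le> max_stabilizer_size \<Omega> G)"

text \<open>Cosets of point stabilizers g G_x (for a stabilizer G_x, the right coset G_x g
equals the left coset g G_{g^{-1} x}, so left cosets cover all cosets).\<close>
definition stabilizer_coset :: "nat set \<Rightarrow> (nat \<Rightarrow> nat) set \<Rightarrow> (nat \<Rightarrow> nat) set \<Rightarrow> bool" where
  "stabilizer_coset \<Omega> G S \<longleftrightarrow>
     (\<exists>g\<in>G. \<exists>x\<in>\<Omega>. S = (\<lambda>h. g \<circ> h) ` stabilizer G x)"

definition strict_EKR :: "nat set \<Rightarrow> (nat \<Rightarrow> nat) set \<Rightarrow> bool" where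
  "strict_EKR \<Omega> G \<longleftrightarrow> EKR \<Omega> G \<and>
     (\<forall>S. S \<subseteq> G \<and> intersecting \<Omega> S \<and> card S = max_stabilizer_size \<Omega> G
          \<longrightarrow> stabilizer_coset \<Omega> G S)"

text \<open>Dihedral group D_n acting on the vertices 1..n of a regular n-gon
(vertex i adjacent to i+1 mod n). Rotations and reflections; identity outside {1..n}.\<close>
definition rotation :: "nat \<Rightarrow> nat \<Rightarrow> nat \<Rightarrow> nat" where
  "rotation n k x = (if x \<in> {1..n} then (x - 1 + k) mod n + 1 else x)"

definition reflection :: "nat \<Rightarrow> nat \<Rightarrow> nat \<Rightarrow> nat" where
  "reflection n k x = (if x \<in> {1..n} then (k + n - (x - 1)) mod n + 1 else x)"

definition dihedral :: "nat \<Rightarrow> (nat \<Rightarrow> nat) set" where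
  "dihedral n = rotation n ` {..<n} \<union> reflection n ` {..<n}"

end

theory Submission
  imports Defs
begin

text \<open>Identify vertex \<open>x\<close> with the residue \<open>x - 1\<close> mod \<open>n\<close>: rotations become
translations \<open>i \<mapsto> i + k\<close> and reflections become \<open>i \<mapsto> k - i\<close>. So two distinct rotations
disagree at every vertex, and so do two distinct reflections; an intersecting set therefore
contains at most one of each, i.e. at most 2 elements, which is the order of every point
stabiliser \<open>{id, reflection through x}\<close>. If a rotation \<open>r\<close> and a reflection \<open>s\<close> agree at
\<open>y\<close>, then \<open>r\<inverse> s\<close> is a reflection fixing \<open>y\<close>, so \<open>{r, s}\<close> is the coset of the stabiliser
of \<open>y\<close> through \<open>r\<close>.\<close>

lemma involution_permutes:
  assumes "\<And>x. f (f x) = x" "\<And>x. x \<notin> S \<Longrightarrow> f x = x"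
  shows "f permutes S"
  unfolding permutes_def using assms by metis

lemma intersect_iff_agree:
  assumes "\<tau> permutes \<Omega>"
  shows "intersect \<Omega> \<pi> \<tau> \<longleftrightarrow> (\<exists>y\<in>\<Omega>. \<pi> y = \<tau> y)"
proof -
  have "(\<exists>x\<in>\<Omega>. \<pi> (inv \<tau> x) = x) \<longleftrightarrow> (\<exists>y\<in>\<Omega>. \<pi> y = \<tau> y)"
    using assms by (metis permutes_inv_eq permutes_inverses(2) permutes_not_in)
  then show ?thesis
    unfolding intersect_def by simp
qed

lemma intersecting_card_inter_image_le_one:
  assumes "intersecting \<Omega> S" "finite S" "\<And>g. g \<in> S \<Longrightarrow> g permutes \<Omega>"
    and nowhere_agree: "\<And>a b x. a \<in> I \<Longrightarrow> b \<in> I \<Longrightarrow> x \<in> \<Omega> \<Longrightarrow> f a x = f b x \<Longrightarrow> a = b"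
  shows "card (S \<inter> f ` I) \<le> 1"
proof -
  have "g = h" if gh: "g \<in> S \<inter> f ` I" "h \<in> S \<inter> f ` I" for g h
  proof -
    obtain a b where ab: "a \<in> I" "b \<in> I" "g = f a" "h = f b"
      using gh by blast
    obtain x where "x \<in> \<Omega>" "g x = h x"
      using assms(1,3) gh unfolding intersecting_def by (metis IntD1 intersect_iff_agree)
    with ab nowhere_agree show ?thesis
      by blast
  qed
  then show ?thesis
    using assms(2) by (simp add: card_le_Suc0_iff_eq)
qed

lemma eq_if_dvd_diff_less:
  fixes a b n :: int
  assumes "0 \<le> a" "a < n" "0 \<le> b" "b < n" "n dvd a - b"
  shows "a = b"
  using assms by (metis mod_eq_dvd_iff mod_pos_pos_trivial)

lemma int_rotation:
  assumes "x \<in> {1..n}"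
  shows "int (rotation n k x) - 1 = (int x - 1 + int k) mod int n"
  using assms by (simp add: rotation_def of_nat_mod of_nat_diff algebra_simps)

lemma int_reflection:
  assumes "x \<in> {1..n}"
  shows "int (reflection n k x) - 1 = (int k - (int x - 1)) mod int n"
proof -
  have "int ((k + n - (x - 1)) mod n) = (int k - (int x - 1) + int n) mod int n"
    using assms by (simp add: of_nat_mod of_nat_diff algebra_simps)
  then show ?thesis
    using assms by (simp add: reflection_def)
qed

lemma reflection_in_range: "x \<in> {1..n} \<Longrightarrow> reflection n k x \<in> {1..n}"
  unfolding reflection_def by (auto intro: Suc_leI)

lemma rotation_outside: "x \<notin> {1..n} \<Longrightarrow> rotation n k x = x"
  unfolding rotation_def by (simp only: if_False)

lemma reflection_outside: "x \<notin> {1..n} \<Longrightarrow> reflection n k x = x"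
  unfolding reflection_def by (simp only: if_False)

lemma rotation_zero: "rotation n 0 = id"
  by (auto simp: rotation_def fun_eq_iff)

lemma rotation_eq_rotation_imp_eq:
  assumes "a < n" "b < n" "y \<in> {1..n}" "rotation n a y = rotation n b y"
  shows "a = b"
proof -
  have "(int y - 1 + int a) mod int n = (int y - 1 + int b) mod int n"
    using assms(3,4) int_rotation by metis
  then have "int n dvd int a - int b"
    by (simp add: mod_eq_dvd_iff)
  then show ?thesis
    using assms(1,2) eq_if_dvd_diff_less[of "int a" "int n" "int b"] by simp
qed

lemma reflection_eq_reflection_imp_eq:
  assumes "a < n" "b < n" "y \<in> {1..n}" "reflection n a y = reflection n b y"
  shows "a = b"
proof -
  have "(int a - (int y - 1)) mod int n = (int b - (int y - 1)) mod int n"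
    using assms(3,4) int_reflection by metis
  then have "int n dvd int a - int b"
    by (simp add: mod_eq_dvd_iff)
  then show ?thesis
    using assms(1,2) eq_if_dvd_diff_less[of "int a" "int n" "int b"] by simp
qed

lemma reflection_fixes:
  assumes "x \<in> {1..n}"
  shows "reflection n (2 * (x - 1) mod n) x = x"
proof -
  have "int (reflection n (2 * (x - 1) mod n) x) - 1 = (int (2 * (x - 1) mod n) - (int x - 1)) mod int n"
    using assms by (rule int_reflection)
  also have "\<dots> = (2 * (int x - 1) - (int x - 1)) mod int n"
    using assms by (simp add: of_nat_mod of_nat_diff mod_diff_left_eq)
  also have "\<dots> = int x - 1"
    using assms by simp
  finally show ?thesis by simp
qed

lemma reflection_involution: "reflection n k (reflection n k x) = x"
proof (cases "x \<in> {1..n}")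
  case True
  have "int (reflection n k (reflection n k x)) - 1 = (int k - (int (reflection n k x) - 1)) mod int n"
    using reflection_in_range[OF True] by (rule int_reflection)
  also have "\<dots> = (int k - (int k - (int x - 1)) mod int n) mod int n"
    using True by (simp only: int_reflection)
  also have "\<dots> = int x - 1"
    using True by (simp add: mod_diff_right_eq)
  finally show ?thesis by simp
next
  case False
  then show ?thesis by (simp add: reflection_outside)
qed

lemma rotation_comp_reflection:
  assumes "c < n"
  shows "rotation n a \<circ> reflection n c = reflection n ((a + c) mod n)"
proof
  fix x
  show "(rotation n a \<circ> reflection n c) x = reflection n ((a + c) mod n) x"
  proof (cases "x \<in> {1..n}")
    case True
    have "int (rotation n a (reflection n c x)) - 1 = (int (reflection n c x) - 1 + int a) mod int n"
      using reflection_in_range[OF True] by (rule int_rotation)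
    also have "\<dots> = ((int c - (int x - 1)) mod int n + int a) mod int n"
      using True by (simp only: int_reflection)
    also have "\<dots> = (int a + int c - (int x - 1)) mod int n"
      by (simp add: mod_simps algebra_simps)
    also have "\<dots> = (int ((a + c) mod n) - (int x - 1)) mod int n"
      by (simp only: of_nat_mod of_nat_add mod_diff_left_eq)
    also have "\<dots> = int (reflection n ((a + c) mod n) x) - 1"
      using True by (simp only: int_reflection)
    finally show ?thesis by simp
  next
    case False
    then show ?thesis by (simp add: rotation_outside reflection_outside)
  qed
qed

lemma reflection_permutes: "reflection n k permutes {1..n}"
  by (metis involution_permutes reflection_involution reflection_outside)

lemma rotation_permutes:
  assumes "k < n"
  shows "rotation n k permutes {1..n}"
proof -
  have "rotation n k = rotation n k \<circ> reflection n 0 \<circ> reflection n 0"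
    by (auto simp: fun_eq_iff reflection_involution reflection_outside)
  also have "\<dots> = reflection n k \<circ> reflection n 0"
    using assms by (simp add: rotation_comp_reflection)
  finally show ?thesis
    by (metis permutes_compose reflection_permutes)
qed

lemma dihedral_permutes: "g \<in> dihedral n \<Longrightarrow> g permutes {1..n}"
  unfolding dihedral_def using rotation_permutes reflection_permutes by auto

lemma reflection_ne_id:
  assumes "n \<ge> 3" "c < n"
  shows "reflection n c \<noteq> id"
proof
  assume "reflection n c = id"
  then have "reflection n c 1 = reflection n 0 1" "reflection n c 2 = reflection n 2 2"
    using assms reflection_fixes[of 1 n] reflection_fixes[of 2 n] by simp_all
  then have "c = 0" "c = 2"
    using assms reflection_eq_reflection_imp_eq[of c n 0 1] reflection_eq_reflection_imp_eq[of c n 2 2]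
    by simp_all
  then show False
    by simp
qed

lemma stabilizer_dihedral:
  assumes "x \<in> {1..n}"
  shows "stabilizer (dihedral n) x = {id, reflection n (2 * (x - 1) mod n)}"
proof -
  have "g = id \<or> g = reflection n (2 * (x - 1) mod n)"
    if "g \<in> dihedral n" "g x = x" for g
  proof -
    from \<open>g \<in> dihedral n\<close> consider k where "k < n" "g = rotation n k"
      | k where "k < n" "g = reflection n k"
      unfolding dihedral_def by auto
    then show ?thesis
    proof cases
      case 1
      have "rotation n k x = rotation n 0 x"
        using 1 \<open>g x = x\<close> by (simp add: rotation_zero)
      then show ?thesis
        using 1 assms rotation_eq_rotation_imp_eq[of k n 0 x] by (auto simp: rotation_zero)
    next
      case 2
      have "reflection n k x = reflection n (2 * (x - 1) mod n) x"
        using 2 \<open>g x = x\<close> reflection_fixes[OF assms] by simp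
      then show ?thesis
        using 2 assms reflection_eq_reflection_imp_eq[of k n "2 * (x - 1) mod n" x] by auto
    qed
  qed
  moreover have "id \<in> dihedral n" "reflection n (2 * (x - 1) mod n) \<in> dihedral n"
    using assms unfolding dihedral_def rotation_zero[of n, symmetric] by auto
  ultimately show ?thesis
    using reflection_fixes[OF assms] by (auto simp: stabilizer_def)
qed

lemma max_stabilizer_size_dihedral:
  assumes "n \<ge> 3"
  shows "max_stabilizer_size {1..n} (dihedral n) = 2"
proof -
  have "card (stabilizer (dihedral n) x) = 2" if "x \<in> {1..n}" for x
    using assms that by (simp add: stabilizer_dihedral reflection_ne_id[symmetric])
  then have "(\<lambda>x. card (stabilizer (dihedral n) x)) ` {1..n} = {2}"
    using assms by force
  then show ?thesis
    unfolding max_stabilizer_size_def by simp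
qed

lemma intersecting_dihedral_card_parts_le_1:
  assumes "S \<subseteq> dihedral n" "intersecting {1..n} S"
  shows "card (S \<inter> rotation n ` {..<n}) \<le> 1" "card (S \<inter> reflection n ` {..<n}) \<le> 1"
proof -
  have "finite S"
    using assms(1) finite_subset unfolding dihedral_def by blast
  moreover have "g permutes {1..n}" if "g \<in> S" for g
    using assms(1) that dihedral_permutes by blast
  ultimately show "card (S \<inter> rotation n ` {..<n}) \<le> 1" "card (S \<inter> reflection n ` {..<n}) \<le> 1"
    using assms(2) rotation_eq_rotation_imp_eq reflection_eq_reflection_imp_eq
    by (metis intersecting_card_inter_image_le_one lessThan_iff)+
qed

lemma card_dihedral_subset_le:
  assumes "S \<subseteq> dihedral n"
  shows "card S \<le> card (S \<inter> rotation n ` {..<n}) + card (S \<inter> reflection n ` {..<n})"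
proof -
  have "S = (S \<inter> rotation n ` {..<n}) \<union> (S \<inter> reflection n ` {..<n})"
    using assms unfolding dihedral_def by blast
  then show ?thesis
    by (metis card_Un_le)
qed

lemma intersecting_dihedral_card_le_2:
  assumes "S \<subseteq> dihedral n" "intersecting {1..n} S"
  shows "card S \<le> 2"
  using card_dihedral_subset_le[OF assms(1)] intersecting_dihedral_card_parts_le_1[OF assms] by linarith

lemma intersecting_dihedral_card_2_cases:
  assumes "S \<subseteq> dihedral n" "intersecting {1..n} S" "card S = 2"
  obtains a b where "a < n" "b < n" "S = {rotation n a, reflection n b}"
proof -
  have "card (S \<inter> rotation n ` {..<n}) = 1" "card (S \<inter> reflection n ` {..<n}) = 1"
    using card_dihedral_subset_le[OF assms(1)] intersecting_dihedral_card_parts_le_1[OF assms(1,2)] assms(3)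
    by linarith+
  then obtain g h where g: "S \<inter> rotation n ` {..<n} = {g}" and h: "S \<inter> reflection n ` {..<n} = {h}"
    by (meson card_1_singletonE)
  then obtain a b where "a < n" "g = rotation n a" "b < n" "h = reflection n b"
    by blast
  moreover have "S = {g, h}"
    using assms(1) g h unfolding dihedral_def by blast
  ultimately show ?thesis
    using that by blast
qed

lemma rotation_reflection_pair_eq_coset:
  assumes "a < n" "b < n" "y \<in> {1..n}" "rotation n a y = reflection n b y"
  shows "{rotation n a, reflection n b} = (\<lambda>h. rotation n a \<circ> h) ` stabilizer (dihedral n) y"
proof -
  define c where "c = 2 * (y - 1) mod n"
  have "c < n"
    using assms(3) by (simp add: c_def)
  have "reflection n ((a + c) mod n) y = rotation n a (reflection n c y)"
    using rotation_comp_reflection[OF \<open>c < n\<close>] by (metis comp_apply)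
  also have "\<dots> = reflection n b y"
    using reflection_fixes[OF assms(3)] assms(4) by (simp add: c_def)
  finally have "(a + c) mod n = b"
    using assms(2,3) reflection_eq_reflection_imp_eq[of "(a + c) mod n" n b y] by simp
  moreover have "(\<lambda>h. rotation n a \<circ> h) ` stabilizer (dihedral n) y
      = {rotation n a, reflection n ((a + c) mod n)}"
    by (simp add: stabilizer_dihedral[OF assms(3), folded c_def] rotation_comp_reflection[OF \<open>c < n\<close>])
  ultimately show ?thesis
    by simp
qed

theorem proposition6:
  fixes n :: nat
  assumes "n \<ge> 3"
  shows "strict_EKR {1..n} (dihedral n)"
proof -
  have "stabilizer_coset {1..n} (dihedral n) S"
    if S: "S \<subseteq> dihedral n" "intersecting {1..n} S" "card S = 2" for S
  proof -
    obtain a b where ab: "a < n" "b < n" "S = {rotation n a, reflection n b}"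
      using intersecting_dihedral_card_2_cases[OF S] .
    then have "intersect {1..n} (rotation n a) (reflection n b)"
      using S(2) unfolding intersecting_def by blast
    then obtain y where "y \<in> {1..n}" "rotation n a y = reflection n b y"
      using reflection_permutes intersect_iff_agree by metis
    moreover have "rotation n a \<in> dihedral n"
      using ab(1) by (simp add: dihedral_def)
    ultimately show ?thesis
      unfolding stabilizer_coset_def ab(3)
      using rotation_reflection_pair_eq_coset[OF ab(1,2)] by blast
  qed
  then show ?thesis
    unfolding strict_EKR_def EKR_def max_stabilizer_size_dihedral[OF assms]
    using intersecting_dihedral_card_le_2 by blast
qed

end
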